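(* Let $K$ be a field of characteristic zero, $R=K[x,y,z]$ with the standard grading, and let $a,b,c,\beta,\gamma$ be integers with $a\geq c\geq 2$, $1\leq \beta\leq b-1$ and $\max\{1,b-a+1\}\leq \gamma\leq \min\{b-1,c-1\}$. Consider the ideal $$I=(x^a,\ y^b-x^{b-\gamma}z^\gamma,\ z^c,\ x^{a-b+\gamma}y^{b-\beta},\ y^{b-\beta}z^{c-\gamma})\subset R.$$ If one of $a,b,c$ is equal to two, then $R/I$ has the weak Lefschetz property.
   Context: A graded Artinian $K$-algebra $A=\bigoplus_i [A]_i$ has the weak Lefschetz property (WLP) if there exists a linear form $L\in[A]_1$ such that the multiplication map $\times L:[A]_i\to[A]_{i+1}$ has maximal rank (i.e. is injective or surjective) for every $i$. *)

theory Defs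
  imports "HOL-Library.Poly_Mapping" "HOL-Library.Product_Plus"
begin

text \<open>The polynomial ring R = K[x,y,z]: finitely supported functions from exponent
triples (i,j,k) (standing for x^i y^j z^k) to K, with convolution product.\<close>

type_synonym 'a poly3 = "(nat \<times> nat \<times> nat) \<Rightarrow>\<^sub>0 'a"

definition mon3 :: "nat \<Rightarrow> nat \<Rightarrow> nat \<Rightarrow> 'a::{zero,one} poly3" where
  "mon3 i j k = Poly_Mapping.single (i, j, k) 1"

definition tdeg :: "nat \<times> nat \<times> nat \<Rightarrow> nat" where
  "tdeg m = (case m of (i, j, k) \<Rightarrow> i + j + k)"

definition homog :: "nat \<Rightarrow> 'a::zero poly3 \<Rightarrow> bool" where
  "homog d f \<longleftrightarrow> (\<forall>m \<in> Poly_Mapping.keys f. tdeg m = d)"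

definition gen_ideal :: "'a::comm_ring_1 poly3 list \<Rightarrow> 'a poly3 set" where
  "gen_ideal gs = {f. \<exists>hs. f = (\<Sum>i<length gs. hs i * gs ! i)}"

text \<open>For a homogeneous ideal I, [R/I]_d = [R]_d / [I]_d with [I]_d = I \<inter> [R]_d.
  Injectivity of \<times>L : [R/I]_d \<rightarrow> [R/I]_(d+1):\<close>
definition mult_inj :: "'a::comm_ring_1 poly3 set \<Rightarrow> 'a poly3 \<Rightarrow> nat \<Rightarrow> bool" where
  "mult_inj I L d \<longleftrightarrow> (\<forall>f. homog d f \<and> L * f \<in> I \<longrightarrow> f \<in> I)"

definition mult_surj :: "'a::comm_ring_1 poly3 set \<Rightarrow> 'a poly3 \<Rightarrow> nat \<Rightarrow> bool" where
  "mult_surj I L d \<longleftrightarrow>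
     (\<forall>g. homog (Suc d) g \<longrightarrow> (\<exists>f. homog d f \<and> g - L * f \<in> I))"

text \<open>Weak Lefschetz property of R/I (I a homogeneous ideal): some linear form L
  (every element of [R/I]_1 is the class of a linear form of R) such that
  \<times>L has maximal rank in every degree.\<close>
definition has_WLP :: "'a::comm_ring_1 poly3 set \<Rightarrow> bool" where
  "has_WLP I \<longleftrightarrow> (\<exists>L. homog 1 L \<and> (\<forall>d. mult_inj I L d \<or> mult_surj I L d))"

end

theory Submission
  imports Defs
begin

text \<open>The hypotheses force \<gamma> = 1, so with s = b - \<beta> the ideal is
  I = (x^a, y^b - x^(b-1) z, z^c, x^(a-b+1) y^s, y^s z^(c-1)), and L = x + y turns out to be a
  Lefschetz element over any commutative ring.

  Trading every y^b for x^(b-1) z and discarding the monomials of the leading-term ideal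
  (x^a, y^b, z^c, x^(a-b+1) y^s, y^s z^(c-1)) defines an additive normal form nf that vanishes
  on I and satisfies f - nf f \<in> I.

  Let d < a + s - b. If L g \<in> I for a nonzero normal form g of degree d, take the monomial m of g
  with least z-exponent and, among those, largest x-exponent. Then x m is standard, and its
  coefficient in nf (L g) = 0 is the coefficient of m in g, a contradiction: \<times>L is injective.

  Let d \<ge> a + s - b. Modulo L, every monomial x^i y^j z^k of degree d + 1 is \<plusminus>x^(i+j) z^k,
  and also \<plusminus>x^(i+j-s) y^s z^k. For c = 2 the latter lies in I. For b = 2, the congruences
  x^n z^(k+1) \<equiv> x^(n-1) y^2 z^k \<equiv> x^(n+1) z^k modulo I + (L) lead to x^(d+1) or z^(d+1), both
  in I. Hence \<times>L is surjective.\<close>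

lemma poly_mapping_sum_single:
  "p = (\<Sum>k\<in>Poly_Mapping.keys p. Poly_Mapping.single k (Poly_Mapping.lookup p k))"
proof (rule poly_mapping_eqI)
  fix x
  show "Poly_Mapping.lookup p x
      = Poly_Mapping.lookup (\<Sum>k\<in>Poly_Mapping.keys p. Poly_Mapping.single k (Poly_Mapping.lookup p k)) x"
    by (cases "x \<in> Poly_Mapping.keys p") (auto simp: lookup_sum lookup_single when_def in_keys_iff)
qed

lemma poly_mapping_keys_induct [case_names zero single add]:
  fixes p :: "'a \<Rightarrow>\<^sub>0 'b::comm_monoid_add"
  assumes "P 0"
    and "\<And>k. k \<in> Poly_Mapping.keys p \<Longrightarrow> P (Poly_Mapping.single k (Poly_Mapping.lookup p k))"
    and "\<And>f g. P f \<Longrightarrow> P g \<Longrightarrow> P (f + g)"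
  shows "P p"
proof -
  have "P (\<Sum>k\<in>K. Poly_Mapping.single k (Poly_Mapping.lookup p k))"
    if "K \<subseteq> Poly_Mapping.keys p" for K
    using finite_subset[OF that finite_keys] that
    by (induction K rule: finite_induct) (auto simp: assms)
  then show ?thesis
    by (subst poly_mapping_sum_single) simp
qed

lemma gen_ideal_0: "0 \<in> gen_ideal gs"
  unfolding gen_ideal_def by (intro CollectI exI[of _ "\<lambda>_. 0"]) simp

lemma gen_ideal_add:
  assumes "f \<in> gen_ideal gs" and "g \<in> gen_ideal gs"
  shows "f + g \<in> gen_ideal gs"
proof -
  obtain hf hg where "f = (\<Sum>i<length gs. hf i * gs ! i)" "g = (\<Sum>i<length gs. hg i * gs ! i)"
    using assms unfolding gen_ideal_def by blast
  then show ?thesis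
    unfolding gen_ideal_def
    by (intro CollectI exI[of _ "\<lambda>i. hf i + hg i"]) (simp add: sum.distrib distrib_right)
qed

lemma gen_ideal_mult:
  assumes "f \<in> gen_ideal gs"
  shows "r * f \<in> gen_ideal gs"
proof -
  obtain hf where "f = (\<Sum>i<length gs. hf i * gs ! i)"
    using assms unfolding gen_ideal_def by blast
  then show ?thesis
    unfolding gen_ideal_def
    by (intro CollectI exI[of _ "\<lambda>i. r * hf i"]) (simp add: sum_distrib_left mult.assoc)
qed

lemma gen_ideal_minus: "f \<in> gen_ideal gs \<Longrightarrow> - f \<in> gen_ideal gs"
  using gen_ideal_mult[of f gs "- 1"] by simp

lemma gen_ideal_diff: "f \<in> gen_ideal gs \<Longrightarrow> g \<in> gen_ideal gs \<Longrightarrow> f - g \<in> gen_ideal gs"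
  using gen_ideal_add[of f gs "- g"] gen_ideal_minus by fastforce

lemma gen_ideal_mult_generator:
  assumes "g \<in> set gs"
  shows "r * g \<in> gen_ideal gs"
proof -
  obtain i where i: "i < length gs" "gs ! i = g"
    using assms by (auto simp: in_set_conv_nth)
  have "(\<Sum>j<length gs. (if j = i then r else 0) * gs ! j) = r * g"
    using i by (simp add: if_distrib[of "\<lambda>x. x * _"] cong: if_cong)
  then show ?thesis
    unfolding gen_ideal_def by (intro CollectI exI[of _ "\<lambda>j. if j = i then r else 0"]) simp
qed

lemma additive_vanishes_on_gen_ideal:
  fixes \<phi> :: "'a::comm_ring_1 poly3 \<Rightarrow> 'b::ab_group_add"
  assumes add: "\<And>f g. \<phi> (f + g) = \<phi> f + \<phi> g"
    and gens: "\<And>h g. g \<in> set gs \<Longrightarrow> \<phi> (h * g) = 0"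
    and f: "f \<in> gen_ideal gs"
  shows "\<phi> f = 0"
proof -
  obtain hs where hs: "f = (\<Sum>i<length gs. hs i * gs ! i)"
    using f unfolding gen_ideal_def by blast
  have \<phi>_0: "\<phi> 0 = 0"
    using add[of 0 0] by simp
  have "\<phi> (\<Sum>i\<in>A. hs i * gs ! i) = 0" if "A \<subseteq> {..<length gs}" for A
    using finite_subset[OF that] that
    by (induction A rule: finite_induct) (simp_all add: \<phi>_0 add gens)
  then show ?thesis
    using hs by blast
qed

lemma homog_0 [simp]: "homog d 0"
  by (simp add: homog_def)

lemma homog_add: "homog d f \<Longrightarrow> homog d g \<Longrightarrow> homog d (f + g)"
  unfolding homog_def using keys_add[of f g] by auto

lemma homog_diff: "homog d f \<Longrightarrow> homog d g \<Longrightarrow> homog d (f - g)"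
  unfolding homog_def using keys_diff[of f g] by auto

lemma homog_mult:
  fixes f g :: "'a::comm_semiring_1 poly3"
  assumes "homog d f" and "homog e g"
  shows "homog (d + e) (f * g)"
  unfolding homog_def
proof
  fix m assume "m \<in> Poly_Mapping.keys (f * g)"
  then obtain u v where "m = u + v" "u \<in> Poly_Mapping.keys f" "v \<in> Poly_Mapping.keys g"
    using keys_mult by blast
  moreover from this have "tdeg u = d" "tdeg v = e"
    using assms unfolding homog_def by auto
  ultimately show "tdeg m = d + e"
    by (cases u, cases v) (simp add: tdeg_def)
qed

lemma homog_single: "tdeg p = d \<Longrightarrow> homog d (Poly_Mapping.single p v)"
  by (simp add: homog_def)

lemma homog_mon3: "i + j + k = d \<Longrightarrow> homog d (mon3 i j k)"
  by (simp add: mon3_def homog_def tdeg_def)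

lemma homog_obtain_lex_min_key:
  fixes g :: "'a::zero poly3"
  assumes "homog d g" and "g \<noteq> 0"
  obtains i j k where "(i, j, k) \<in> Poly_Mapping.keys g"
    and "\<And>i' j' k'. (i', j', k') \<in> Poly_Mapping.keys g \<Longrightarrow> k \<le> k' \<and> (k' = k \<longrightarrow> i' \<le> i)"
proof -
  \<comment> \<open>lexicographic in (k, -i), as 0 \<le> i \<le> d\<close>
  define \<phi> where "\<phi> = (\<lambda>(i::nat, j::nat, k). k * Suc d + (d - i))"
  obtain p0 where "p0 \<in> Poly_Mapping.keys g"
    using assms(2) by (metis keys_eq_empty ex_in_conv)
  then obtain m where m: "m \<in> Poly_Mapping.keys g"
    and least: "\<And>p. p \<in> Poly_Mapping.keys g \<Longrightarrow> \<phi> m \<le> \<phi> p"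
    using ex_has_least_nat[of "\<lambda>p. p \<in> Poly_Mapping.keys g" p0 \<phi>] by blast
  obtain i j k where ijk: "m = (i, j, k)"
    by (cases m) auto
  have bounded: "i' \<le> d" if "(i', j', k') \<in> Poly_Mapping.keys g" for i' j' k'
    using assms(1) that unfolding homog_def tdeg_def by fastforce
  show thesis
  proof (rule that)
    show "(i, j, k) \<in> Poly_Mapping.keys g"
      using m ijk by simp
  next
    fix i' j' k' assume p: "(i', j', k') \<in> Poly_Mapping.keys g"
    have le: "k * Suc d + (d - i) \<le> k' * Suc d + (d - i')"
      using least[OF p] unfolding \<phi>_def ijk by simp
    have "k \<le> k'"
    proof (rule ccontr)
      assume "\<not> k \<le> k'"
      then have "Suc k' * Suc d \<le> k * Suc d"
        by (intro mult_le_mono1) simp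
      then show False
        using le by simp
    qed
    moreover have "i \<le> d" "i' \<le> d"
      using bounded m p ijk by auto
    ultimately show "k \<le> k' \<and> (k' = k \<longrightarrow> i' \<le> i)"
      using le by auto
  qed
qed

lemma single_mult_mon3:
  "Poly_Mapping.single (i, j, k) v * (mon3 i' j' k' :: 'a::semiring_1 poly3)
    = Poly_Mapping.single (i + i', j + j', k + k') v"
  by (simp add: mon3_def mult_single)

lemma mon3_mult:
  "(mon3 i j k :: 'a::semiring_1 poly3) * mon3 i' j' k' = mon3 (i + i') (j + j') (k + k')"
  by (simp add: mon3_def mult_single)

abbreviation x_plus_y :: "'a::comm_ring_1 poly3" where
  "x_plus_y \<equiv> mon3 1 0 0 + mon3 0 1 0"

definition in_mult_image :: "'a::comm_ring_1 poly3 set \<Rightarrow> 'a poly3 \<Rightarrow> nat \<Rightarrow> 'a poly3 \<Rightarrow> bool" where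
  "in_mult_image I L d g \<longleftrightarrow> (\<exists>f. homog d f \<and> g - L * f \<in> I)"

lemma in_mult_image_if_in_ideal: "g \<in> gen_ideal gs \<Longrightarrow> in_mult_image (gen_ideal gs) L d g"
  unfolding in_mult_image_def by (intro exI[of _ 0]) simp

lemma in_mult_image_add:
  assumes "in_mult_image (gen_ideal gs) L d g" and "in_mult_image (gen_ideal gs) L d g'"
  shows "in_mult_image (gen_ideal gs) L d (g + g')"
proof -
  obtain f f' where "homog d f" "g - L * f \<in> gen_ideal gs" "homog d f'" "g' - L * f' \<in> gen_ideal gs"
    using assms unfolding in_mult_image_def by blast
  moreover have "g + g' - L * (f + f') = (g - L * f) + (g' - L * f')"
    by (simp add: algebra_simps)
  ultimately show ?thesis
    unfolding in_mult_image_def by (metis gen_ideal_add homog_add)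
qed

lemma in_mult_image_scale:
  assumes "in_mult_image (gen_ideal gs) L d g"
  shows "in_mult_image (gen_ideal gs) L d (Poly_Mapping.single 0 v * g)"
proof -
  obtain f where f: "homog d f" "g - L * f \<in> gen_ideal gs"
    using assms unfolding in_mult_image_def by blast
  have "homog (0 + d) (Poly_Mapping.single 0 v * f)"
    by (rule homog_mult[OF homog_single f(1)]) (simp add: tdeg_def zero_prod_def)
  moreover have "Poly_Mapping.single 0 v * g - L * (Poly_Mapping.single 0 v * f)
      = Poly_Mapping.single 0 v * (g - L * f)"
    by (simp add: algebra_simps)
  ultimately show ?thesis
    unfolding in_mult_image_def using f(2) gen_ideal_mult by fastforce
qed

lemma in_mult_image_cong:
  assumes "g - g' \<in> gen_ideal gs" and "in_mult_image (gen_ideal gs) L d g'"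
  shows "in_mult_image (gen_ideal gs) L d g"
proof -
  obtain f where "homog d f" "g' - L * f \<in> gen_ideal gs"
    using assms(2) unfolding in_mult_image_def by blast
  moreover have "g - L * f = (g - g') + (g' - L * f)"
    by simp
  ultimately show ?thesis
    unfolding in_mult_image_def using assms(1) gen_ideal_add by metis
qed

lemma in_mult_image_mult_diff:
  assumes "homog d m" and "in_mult_image (gen_ideal gs) L d g"
  shows "in_mult_image (gen_ideal gs) L d (L * m - g)"
proof -
  obtain f where "homog d f" "g - L * f \<in> gen_ideal gs"
    using assms(2) unfolding in_mult_image_def by blast
  moreover have "L * m - g - L * (m - f) = - (g - L * f)"
    by (simp add: algebra_simps)
  ultimately show ?thesis
    unfolding in_mult_image_def using assms(1) gen_ideal_minus homog_diff by metis
qed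

lemma mult_surj_if_mon3_in_mult_image:
  assumes mon3: "\<And>i j k. i + j + k = Suc d \<Longrightarrow> in_mult_image (gen_ideal gs) L d (mon3 i j k)"
  shows "mult_surj (gen_ideal gs) L d"
  unfolding mult_surj_def
proof (intro allI impI)
  fix g :: "'a poly3"
  assume g: "homog (Suc d) g"
  have "in_mult_image (gen_ideal gs) L d g"
  proof (induction g rule: poly_mapping_keys_induct)
    case zero
    show ?case by (simp add: in_mult_image_if_in_ideal gen_ideal_0)
  next
    case (single p)
    obtain i j k where p: "p = (i, j, k)"
      by (cases p) auto
    have "i + j + k = Suc d"
      using g single unfolding homog_def p tdeg_def by auto
    then have "in_mult_image (gen_ideal gs) L d
        (Poly_Mapping.single 0 (Poly_Mapping.lookup g p) * mon3 i j k)"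
      by (intro in_mult_image_scale mon3)
    then show ?case
      by (simp add: mon3_def mult_single p)
  next
    case (add f g)
    then show ?case by (rule in_mult_image_add)
  qed
  then show "\<exists>f. homog d f \<and> g - L * f \<in> gen_ideal gs"
    unfolding in_mult_image_def .
qed

lemma in_mult_image_x_plus_y_swap:
  assumes "i + j + k = d"
  shows "in_mult_image (gen_ideal gs) x_plus_y d (mon3 i (Suc j) k)
     \<longleftrightarrow> in_mult_image (gen_ideal gs) x_plus_y d (mon3 (Suc i) j k)"
proof -
  have m: "homog d (mon3 i j k :: 'a poly3)"
    using assms by (rule homog_mon3)
  have "x_plus_y * mon3 i j k = mon3 (Suc i) j k + (mon3 i (Suc j) k :: 'a poly3)"
    by (simp add: distrib_right mon3_mult)
  then have "mon3 i (Suc j) k = x_plus_y * mon3 i j k - (mon3 (Suc i) j k :: 'a poly3)"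
    and "mon3 (Suc i) j k = x_plus_y * mon3 i j k - (mon3 i (Suc j) k :: 'a poly3)"
    by (simp_all add: algebra_simps)
  then show ?thesis
    using in_mult_image_mult_diff[OF m] by metis
qed

lemma in_mult_image_x_plus_y_mon3_iff:
  assumes "i + j = i' + j'" and "i + j + k = Suc d"
  shows "in_mult_image (gen_ideal gs) x_plus_y d (mon3 i j k)
     \<longleftrightarrow> in_mult_image (gen_ideal gs) x_plus_y d (mon3 i' j' k)"
proof -
  have to_x: "in_mult_image (gen_ideal gs) x_plus_y d (mon3 i j k)
      \<longleftrightarrow> in_mult_image (gen_ideal gs) x_plus_y d (mon3 (i + j) 0 k)"
    if "i + j + k = Suc d" for i j
    using that
  proof (induction j arbitrary: i)
    case (Suc j)
    then show ?case
      using in_mult_image_x_plus_y_swap[of i j k d gs] by simp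
  qed simp
  show ?thesis
    using to_x[of i j] to_x[of i' j'] assms by simp
qed

locale gamma_one_ideal =
  fixes a b c s :: nat
  assumes b_pos: "0 < b"
begin

definition gens :: "'a::comm_ring_1 poly3 list" where
  "gens =
    [mon3 a 0 0, mon3 0 b 0 - mon3 (b - 1) 0 1, mon3 0 0 c, mon3 (a - b + 1) s 0, mon3 0 s (c - 1)]"

abbreviation ideal :: "'a::comm_ring_1 poly3 set" where
  "ideal \<equiv> gen_ideal gens"

text \<open>The exponent of the remainder of x^i y^j z^k on division by y^b - x^(b-1) z.\<close>

definition reduce :: "nat \<times> nat \<times> nat \<Rightarrow> nat \<times> nat \<times> nat" where
  "reduce = (\<lambda>(i, j, k). (i + j div b * (b - 1), j mod b, k + j div b))"

definition standard :: "nat \<times> nat \<times> nat \<Rightarrow> bool" where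
  "standard = (\<lambda>(i, j, k). i < a \<and> j < b \<and> k < c \<and> \<not> (s \<le> j \<and> (a - b + 1 \<le> i \<or> c - 1 \<le> k)))"

definition nf_term :: "nat \<times> nat \<times> nat \<Rightarrow> 'a::comm_ring_1 \<Rightarrow> 'a poly3" where
  "nf_term p v = (if standard (reduce p) then Poly_Mapping.single (reduce p) v else 0)"

definition nf :: "'a::comm_ring_1 poly3 \<Rightarrow> 'a poly3" where
  "nf f = (\<Sum>p\<in>Poly_Mapping.keys f. nf_term p (Poly_Mapping.lookup f p))"

lemma in_set_gens:
  "mon3 a 0 0 \<in> set (gens :: 'a::comm_ring_1 poly3 list)"
  "mon3 0 b 0 - mon3 (b - 1) 0 1 \<in> set (gens :: 'a poly3 list)"
  "mon3 0 0 c \<in> set (gens :: 'a poly3 list)"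
  "mon3 (a - b + 1) s 0 \<in> set (gens :: 'a poly3 list)"
  "mon3 0 s (c - 1) \<in> set (gens :: 'a poly3 list)"
  unfolding gens_def by (intro list.set_intros)+

lemma reduce_simp [simp]: "reduce (i, j, k) = (i + j div b * (b - 1), j mod b, k + j div b)"
  by (simp add: reduce_def)

lemma reduce_Suc_y:
  "j < b \<Longrightarrow> reduce (i, Suc j, k) = (if Suc j < b then (i, Suc j, k) else (i + (b - 1), 0, Suc k))"
  by (auto simp: not_less le_Suc_eq)

lemma reduce_add_b: "reduce (i, j + b, k) = reduce (i + (b - 1), j, Suc k)"
proof -
  have "(j + b) div b = Suc (j div b)" "(j + b) mod b = j mod b"
    using b_pos by (simp_all add: div_add_self2)
  then show ?thesis
    by simp
qed

lemma reduce_add_y: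
  assumes "reduce (i, j + t, k) = (i', j', k')"
  shows "i \<le> i' \<and> k \<le> k' \<and> (t \<le> j' \<or> i + (b - 1) \<le> i' \<and> k < k')"
proof -
  have i': "i' = i + (j + t) div b * (b - 1)" and j': "j' = (j + t) mod b"
    and k': "k' = k + (j + t) div b"
    using assms by simp_all
  show ?thesis
  proof (cases "(j + t) div b = j div b")
    case True
    have "(j + t) mod b = j mod b + t"
      using mod_div_mult_eq[of j b] mod_div_mult_eq[of "j + t" b] unfolding True by linarith
    then show ?thesis
      using i' j' k' by simp
  next
    case False
    then have "1 \<le> (j + t) div b"
      using div_le_mono[of j "j + t" b] by simp
    then have "b - 1 \<le> (j + t) div b * (b - 1)"
      using mult_le_mono1[of 1 "(j + t) div b" "b - 1"] by simp
    then show ?thesis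
      using i' k' \<open>1 \<le> (j + t) div b\<close> by simp
  qed
qed

lemma tdeg_reduce: "tdeg (reduce p) = tdeg p"
proof -
  obtain i j k where p: "p = (i, j, k)"
    by (cases p) auto
  have "j div b * (b - 1) + j div b = j div b * b"
    using b_pos by (simp add: algebra_simps)
  moreover have "tdeg (reduce p) = i + (j div b * (b - 1) + j div b) + j mod b + k"
    by (simp add: p tdeg_def)
  moreover have "tdeg p = i + j + k"
    by (simp add: p tdeg_def)
  ultimately show ?thesis
    using div_mult_mod_eq[of j b] by linarith
qed

lemma nf_term_0 [simp]: "nf_term p 0 = 0"
  by (simp add: nf_term_def)

lemma nf_term_add: "nf_term p (u + v) = nf_term p u + nf_term p v"
  by (simp add: nf_term_def single_add)

lemma lookup_nf_term:
  "Poly_Mapping.lookup (nf_term p v) n = (if reduce p = n \<and> standard n then v else 0)"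
  by (auto simp: nf_term_def lookup_single when_def)

lemma nf_0 [simp]: "nf 0 = 0"
  by (simp add: nf_def)

lemma nf_add: "nf (f + g) = nf f + nf g"
  unfolding nf_def by (rule setsum_keys_plus_distrib) (simp_all add: nf_term_add)

lemma nf_diff: "nf (f - g) = nf f - nf g"
  using nf_add[of "f - g" g] by (simp add: algebra_simps)

lemma nf_single: "nf (Poly_Mapping.single p v) = nf_term p v"
  by (cases "v = 0") (simp_all add: nf_def)

lemma nf_sum: "nf (\<Sum>i\<in>A. f i) = (\<Sum>i\<in>A. nf (f i))"
  by (induction A rule: infinite_finite_induct) (simp_all add: nf_add)

lemma nf_mult_eq_0:
  assumes "\<And>p v. nf (Poly_Mapping.single p v * g) = 0"
  shows "nf (h * g) = 0"
  by (induction h rule: poly_mapping_keys_induct) (simp_all add: nf_add distrib_right assms)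

lemma nf_single_mult_mon3:
  "nf (Poly_Mapping.single (i, j, k) v * mon3 i' j' k') = nf_term (i + i', j + j', k + k') v"
  by (simp add: single_mult_mon3 nf_single)

lemma not_standard_reduce_mult_xy: "\<not> standard (reduce (i + (a - b + 1), j + s, k))"
proof -
  obtain i' j' k' where r: "reduce (i + (a - b + 1), j + s, k) = (i', j', k')"
    by (cases "reduce (i + (a - b + 1), j + s, k)") auto
  then show ?thesis
    using reduce_add_y[OF r] by (auto simp: standard_def)
qed

lemma not_standard_reduce_mult_yz: "\<not> standard (reduce (i, j + s, k + (c - 1)))"
proof -
  obtain i' j' k' where r: "reduce (i, j + s, k + (c - 1)) = (i', j', k')"
    by (cases "reduce (i, j + s, k + (c - 1))") auto
  then show ?thesis
    using reduce_add_y[OF r] by (auto simp: standard_def)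
qed

lemma nf_mult_gen_eq_0:
  fixes g :: "'a::comm_ring_1 poly3"
  assumes "g \<in> set gens"
  shows "nf (h * g) = 0"
proof (rule nf_mult_eq_0)
  fix p :: "nat \<times> nat \<times> nat" and v :: 'a
  obtain i j k where p: "p = (i, j, k)"
    by (cases p) auto
  from assms consider "g = mon3 a 0 0" | "g = mon3 0 b 0 - mon3 (b - 1) 0 1" | "g = mon3 0 0 c"
    | "g = mon3 (a - b + 1) s 0" | "g = mon3 0 s (c - 1)"
    by (auto simp: gens_def)
  then show "nf (Poly_Mapping.single p v * g) = 0"
  proof cases
    case 2
    then show ?thesis
      by (simp add: p right_diff_distrib nf_diff nf_single_mult_mon3 nf_term_def reduce_add_b
          del: reduce_simp)
  next
    case 4
    then show ?thesis
      using not_standard_reduce_mult_xy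
      by (simp add: p nf_single_mult_mon3 nf_term_def del: reduce_simp)
  next
    case 5
    then show ?thesis
      using not_standard_reduce_mult_yz
      by (simp add: p nf_single_mult_mon3 nf_term_def del: reduce_simp)
  qed (simp_all add: p nf_single_mult_mon3 nf_term_def standard_def)
qed

lemma nf_eq_0_if_in_ideal: "f \<in> ideal \<Longrightarrow> nf f = 0"
  by (rule additive_vanishes_on_gen_ideal[OF nf_add nf_mult_gen_eq_0])

lemma single_diff_single_reduce_in_ideal:
  "Poly_Mapping.single p 1 - Poly_Mapping.single (reduce p) 1 \<in> (ideal :: 'a::comm_ring_1 poly3 set)"
proof -
  have "Poly_Mapping.single (i, j, k) 1 - Poly_Mapping.single (reduce (i, j, k)) 1 \<in> (ideal :: 'a poly3 set)"
    for i j k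
  proof (induction j arbitrary: i k rule: less_induct)
    case (less j)
    show ?case
    proof (cases "j < b")
      case True
      then show ?thesis
        by (simp add: gen_ideal_0)
    next
      case False
      define j' where "j' = j - b"
      have j: "j = j' + b" and "j' < j"
        using False b_pos by (simp_all add: j'_def)
      let ?step = "Poly_Mapping.single (i, j' + b, k) 1
        - Poly_Mapping.single (i + (b - 1), j', Suc k) (1 :: 'a)"
      have "?step = Poly_Mapping.single (i, j', k) 1 * (mon3 0 b 0 - mon3 (b - 1) 0 1)"
        by (simp add: right_diff_distrib single_mult_mon3)
      with in_set_gens(2) have "?step \<in> ideal"
        by (metis gen_ideal_mult_generator)
      from gen_ideal_add[OF this less[OF \<open>j' < j\<close>, of "i + (b - 1)" "Suc k"]] show ?thesis
        unfolding j reduce_add_b by simp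
    qed
  qed
  then show ?thesis
    by (cases p) blast
qed

lemma mon3_in_ideal_if_dvd_gen:
  assumes "mon3 i' j' k' \<in> set (gens :: 'a::comm_ring_1 poly3 list)" and "i' \<le> i" "j' \<le> j" "k' \<le> k"
  shows "mon3 i j k \<in> (ideal :: 'a poly3 set)"
proof -
  have "mon3 i j k = mon3 (i - i') (j - j') (k - k') * (mon3 i' j' k' :: 'a poly3)"
    using assms(2-4) by (simp add: mon3_mult)
  then show ?thesis
    using gen_ideal_mult_generator[OF assms(1), of "mon3 (i - i') (j - j') (k - k')"] by simp
qed

lemma mon3_in_ideal_if_not_standard:
  assumes "j < b" and "\<not> standard (i, j, k)"
  shows "mon3 i j k \<in> (ideal :: 'a::comm_ring_1 poly3 set)"
proof -
  consider "a \<le> i" | "c \<le> k" | "s \<le> j" "a - b + 1 \<le> i" | "s \<le> j" "c - 1 \<le> k"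
    using assms by (auto simp: standard_def)
  then show ?thesis
    by cases (auto intro: mon3_in_ideal_if_dvd_gen[OF in_set_gens(1)]
        mon3_in_ideal_if_dvd_gen[OF in_set_gens(3)] mon3_in_ideal_if_dvd_gen[OF in_set_gens(4)]
        mon3_in_ideal_if_dvd_gen[OF in_set_gens(5)])
qed

lemma single_diff_nf_term_in_ideal:
  "Poly_Mapping.single p 1 - nf_term p 1 \<in> (ideal :: 'a::comm_ring_1 poly3 set)"
proof (cases "standard (reduce p)")
  case True
  then show ?thesis
    using single_diff_single_reduce_in_ideal by (simp add: nf_term_def)
next
  case False
  obtain i j k where r: "reduce p = (i, j, k)"
    by (cases "reduce p") auto
  have "j < b"
  proof -
    obtain i0 j0 k0 where "p = (i0, j0, k0)"
      by (cases p) auto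
    then have "j = j0 mod b"
      using r by simp
    then show ?thesis
      using b_pos by simp
  qed
  then have "Poly_Mapping.single (reduce p) 1 \<in> (ideal :: 'a poly3 set)"
    using False mon3_in_ideal_if_not_standard r by (simp add: mon3_def)
  moreover have "Poly_Mapping.single p 1 - nf_term p 1
      = (Poly_Mapping.single p 1 - Poly_Mapping.single (reduce p) 1)
        + (Poly_Mapping.single (reduce p) 1 :: 'a poly3)"
    using False by (simp add: nf_term_def)
  ultimately show ?thesis
    using gen_ideal_add[OF single_diff_single_reduce_in_ideal] by metis
qed

lemma diff_nf_in_ideal: "f - nf f \<in> ideal"
proof (induction f rule: poly_mapping_keys_induct)
  case zero
  show ?case by (simp add: gen_ideal_0)
next
  case (single p)
  let ?v = "Poly_Mapping.lookup f p"
  have "Poly_Mapping.single p ?v - nf (Poly_Mapping.single p ?v)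
      = Poly_Mapping.single 0 ?v * (Poly_Mapping.single p 1 - nf_term p 1)"
    by (simp add: nf_single nf_term_def right_diff_distrib mult_single)
  then show ?case
    using gen_ideal_mult[OF single_diff_nf_term_in_ideal] by metis
next
  case (add f g)
  have "f + g - nf (f + g) = (f - nf f) + (g - nf g)"
    by (simp add: nf_add)
  then show ?case
    using add gen_ideal_add by metis
qed

lemma keys_nf:
  assumes "n \<in> Poly_Mapping.keys (nf f)"
  shows "standard n \<and> (\<exists>p\<in>Poly_Mapping.keys f. reduce p = n)"
proof -
  have "n \<in> (\<Union>p\<in>Poly_Mapping.keys f. Poly_Mapping.keys (nf_term p (Poly_Mapping.lookup f p)))"
    using subsetD[OF keys_sum assms[unfolded nf_def]] .
  then obtain p where "p \<in> Poly_Mapping.keys f"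
    and "n \<in> Poly_Mapping.keys (nf_term p (Poly_Mapping.lookup f p))"
    by blast
  then show ?thesis
    by (auto simp: nf_term_def split: if_splits)
qed

lemma homog_nf:
  assumes "homog d f"
  shows "homog d (nf f)"
  unfolding homog_def
proof
  fix n assume "n \<in> Poly_Mapping.keys (nf f)"
  then obtain p where "p \<in> Poly_Mapping.keys f" "reduce p = n"
    using keys_nf by blast
  with assms show "tdeg n = d"
    unfolding homog_def by (auto simp: tdeg_reduce)
qed

lemma nf_single_mult_x_plus_y:
  "nf (Poly_Mapping.single (i, j, k) v * x_plus_y)
    = nf_term (Suc i, j, k) v + nf_term (i, Suc j, k) v"
  by (simp add: distrib_left nf_add nf_single_mult_mon3)

lemma lookup_nf_x_plus_y_mult:
  fixes g :: "'a::comm_ring_1 poly3"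
  assumes std: "\<And>p. p \<in> Poly_Mapping.keys g \<Longrightarrow> standard p"
    and m: "(i, j, k) \<in> Poly_Mapping.keys g"
    and min: "\<And>i' j' k'. (i', j', k') \<in> Poly_Mapping.keys g \<Longrightarrow> k \<le> k' \<and> (k' = k \<longrightarrow> i' \<le> i)"
    and std_x: "standard (Suc i, j, k)"
  shows "Poly_Mapping.lookup (nf (x_plus_y * g)) (Suc i, j, k) = Poly_Mapping.lookup g (i, j, k)"
proof -
  let ?n = "(Suc i, j, k)"
  have coeff: "Poly_Mapping.lookup (nf (Poly_Mapping.single p v * x_plus_y)) ?n
      = (if p = (i, j, k) then v else 0)"
    if p: "p \<in> Poly_Mapping.keys g" for p v
  proof -
    obtain i' j' k' where p_eq: "p = (i', j', k')"
      by (cases p) auto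
    have "j' < b"
      using std[OF p] by (simp add: p_eq standard_def)
    then have x: "reduce (Suc i', j', k') = ?n \<longleftrightarrow> (i', j', k') = (i, j, k)"
      by auto
    have y: "reduce (i', Suc j', k') \<noteq> ?n"
      using min[OF p[unfolded p_eq]] reduce_Suc_y[OF \<open>j' < b\<close>, of i' k'] by auto
    show ?thesis
      unfolding p_eq nf_single_mult_x_plus_y lookup_add lookup_nf_term
      using x y std_x by (simp del: reduce_simp)
  qed
  have "x_plus_y * g
      = x_plus_y * (\<Sum>p\<in>Poly_Mapping.keys g. Poly_Mapping.single p (Poly_Mapping.lookup g p))"
    by (rule arg_cong[OF poly_mapping_sum_single])
  also have "\<dots>
      = (\<Sum>p\<in>Poly_Mapping.keys g. Poly_Mapping.single p (Poly_Mapping.lookup g p) * x_plus_y)"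
    unfolding mult.commute[of x_plus_y] by (rule sum_distrib_right)
  finally have "Poly_Mapping.lookup (nf (x_plus_y * g)) ?n
      = (\<Sum>p\<in>Poly_Mapping.keys g.
          Poly_Mapping.lookup (nf (Poly_Mapping.single p (Poly_Mapping.lookup g p) * x_plus_y)) ?n)"
    by (simp add: nf_sum lookup_sum)
  also have "\<dots> = (\<Sum>p\<in>Poly_Mapping.keys g. if p = (i, j, k) then Poly_Mapping.lookup g p else 0)"
    by (rule sum.cong[OF refl], rule coeff)
  also have "\<dots> = Poly_Mapping.lookup g (i, j, k)"
    using m by simp
  finally show ?thesis .
qed

lemma mult_inj_x_plus_y:
  assumes "s < b" and "d + b < a + s"
  shows "mult_inj ideal x_plus_y d"
  unfolding mult_inj_def
proof (intro allI impI, elim conjE)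
  fix f :: "'a poly3"
  assume f: "homog d f" and Lf: "x_plus_y * f \<in> ideal"
  define g where "g = nf f"
  have "x_plus_y * g = x_plus_y * f - x_plus_y * (f - g)"
    by (simp add: algebra_simps)
  then have "x_plus_y * g \<in> ideal"
    using Lf gen_ideal_diff gen_ideal_mult diff_nf_in_ideal g_def by metis
  then have nf_Lg: "nf (x_plus_y * g) = 0"
    by (rule nf_eq_0_if_in_ideal)
  have g: "homog d g"
    unfolding g_def using f by (rule homog_nf)
  have "g = 0"
  proof (rule ccontr)
    assume "g \<noteq> 0"
    then obtain i j k where m: "(i, j, k) \<in> Poly_Mapping.keys g"
      and min: "\<And>i' j' k'. (i', j', k') \<in> Poly_Mapping.keys g \<Longrightarrow> k \<le> k' \<and> (k' = k \<longrightarrow> i' \<le> i)"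
      using homog_obtain_lex_min_key[OF g] by blast
    have std: "\<And>p. p \<in> Poly_Mapping.keys g \<Longrightarrow> standard p"
      using keys_nf g_def by blast
    have "i + j + k = d"
      using g m unfolding homog_def tdeg_def by fastforce
    then have "standard (Suc i, j, k)"
      using std[OF m] assms by (auto simp: standard_def)
    then have "Poly_Mapping.lookup g (i, j, k) = 0"
      using lookup_nf_x_plus_y_mult[OF std m min] nf_Lg by simp
    then show False
      using m by (simp add: in_keys_iff)
  qed
  then show "f \<in> ideal"
    using diff_nf_in_ideal[of f] g_def by simp
qed

lemma mult_surj_x_plus_y_if_c_eq_2:
  assumes "c = 2" and "b \<le> a" and "a + s \<le> d + b"
  shows "mult_surj (ideal :: 'a::comm_ring_1 poly3 set) x_plus_y d"
proof (rule mult_surj_if_mon3_in_mult_image)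
  fix i j k
  assume deg: "i + j + k = Suc d"
  have via_y_pow_s: "in_mult_image ideal x_plus_y d (mon3 i j k :: 'a poly3)"
    if "mon3 (i + j - s) s k \<in> (ideal :: 'a poly3 set)" and "s \<le> i + j"
  proof -
    have "in_mult_image ideal x_plus_y d (mon3 (i + j - s) s k :: 'a poly3)"
      using that(1) by (rule in_mult_image_if_in_ideal)
    then show ?thesis
      using in_mult_image_x_plus_y_mon3_iff[of i j "i + j - s" s k d "gens :: 'a poly3 list"]
        deg that(2) by simp
  qed
  consider "2 \<le> k" | "k = 1" | "k = 0"
    by linarith
  then show "in_mult_image ideal x_plus_y d (mon3 i j k :: 'a poly3)"
  proof cases
    case 1
    have "mon3 i j k \<in> (ideal :: 'a poly3 set)"
      by (rule mon3_in_ideal_if_dvd_gen[OF in_set_gens(3)]) (use 1 assms(1) in simp_all)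
    then show ?thesis
      by (rule in_mult_image_if_in_ideal)
  next
    case 2
    have "mon3 (i + j - s) s k \<in> (ideal :: 'a poly3 set)"
      by (rule mon3_in_ideal_if_dvd_gen[OF in_set_gens(5)]) (use 2 assms(1) in simp_all)
    then show ?thesis
      using via_y_pow_s assms deg 2 by simp
  next
    case 3
    have "mon3 (i + j - s) s k \<in> (ideal :: 'a poly3 set)"
      by (rule mon3_in_ideal_if_dvd_gen[OF in_set_gens(4)]) (use 3 assms deg in simp_all)
    then show ?thesis
      using via_y_pow_s assms deg 3 by simp
  qed
qed

lemma in_mult_image_x_plus_y_x_z_if_b_eq_2:
  assumes "b = 2" and "c \<le> a" and "a \<le> Suc d" and "n + k = Suc d"
  shows "in_mult_image ideal x_plus_y d (mon3 n 0 k :: 'a::comm_ring_1 poly3)"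
  using assms(4)
proof (induction k arbitrary: n)
  case 0
  have "mon3 n 0 0 \<in> (ideal :: 'a poly3 set)"
    by (rule mon3_in_ideal_if_dvd_gen[OF in_set_gens(1)]) (use 0 assms in simp_all)
  then show ?case
    by (rule in_mult_image_if_in_ideal)
next
  case (Suc k)
  show ?case
  proof (cases n)
    case 0
    have "mon3 n 0 (Suc k) \<in> (ideal :: 'a poly3 set)"
      by (rule mon3_in_ideal_if_dvd_gen[OF in_set_gens(3)]) (use 0 Suc.prems assms in simp_all)
    then show ?thesis
      by (rule in_mult_image_if_in_ideal)
  next
    case (Suc n')
    have "mon3 n 0 (Suc k) - mon3 n' b k
        = - (mon3 n' 0 k * (mon3 0 b 0 - mon3 (b - 1) 0 1) :: 'a poly3)"
      using assms(1) by (simp add: Suc right_diff_distrib mon3_mult numeral_2_eq_2)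
    then have "mon3 n 0 (Suc k) - mon3 n' b k \<in> (ideal :: 'a poly3 set)"
      using gen_ideal_minus[OF gen_ideal_mult_generator[OF in_set_gens(2)]] by metis
    moreover have "in_mult_image ideal x_plus_y d (mon3 n' b k :: 'a poly3)"
    proof -
      have deg: "n' + b + k = Suc d"
        using Suc.prems \<open>n = Suc n'\<close> assms(1) by simp
      then have "in_mult_image ideal x_plus_y d (mon3 (n' + b) 0 k :: 'a poly3)"
        by (rule Suc.IH)
      then show ?thesis
        using in_mult_image_x_plus_y_mon3_iff[of n' b "n' + b" 0 k d "gens :: 'a poly3 list"] deg
        by simp
    qed
    ultimately show ?thesis
      by (rule in_mult_image_cong)
  qed
qed

lemma mult_surj_x_plus_y_if_b_eq_2:
  assumes "b = 2" and "c \<le> a" and "a \<le> Suc d"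
  shows "mult_surj (ideal :: 'a::comm_ring_1 poly3 set) x_plus_y d"
proof (rule mult_surj_if_mon3_in_mult_image)
  fix i j k
  assume "i + j + k = Suc d"
  then show "in_mult_image ideal x_plus_y d (mon3 i j k :: 'a poly3)"
    using in_mult_image_x_plus_y_x_z_if_b_eq_2[OF assms, of "i + j" k]
      in_mult_image_x_plus_y_mon3_iff[of i j "i + j" 0 k d "gens :: 'a poly3 list"] by simp
qed

theorem has_WLP_ideal:
  assumes "0 < s" and "s < b" and "b \<le> a" and "c \<le> a" and "b = 2 \<or> c = 2"
  shows "has_WLP (ideal :: 'a::comm_ring_1 poly3 set)"
  unfolding has_WLP_def
proof (intro exI conjI allI)
  show "homog 1 (x_plus_y :: 'a poly3)"
    by (intro homog_add homog_mon3) simp_all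
next
  fix d
  show "mult_inj ideal x_plus_y d \<or> mult_surj (ideal :: 'a poly3 set) x_plus_y d"
  proof (cases "d + b < a + s")
    case True
    then show ?thesis
      using mult_inj_x_plus_y assms by blast
  next
    case False
    then show ?thesis
      using assms mult_surj_x_plus_y_if_b_eq_2[of d] mult_surj_x_plus_y_if_c_eq_2[of d] by auto
  qed
qed

end

theorem corollary3p8:
  fixes a b c \<beta> \<gamma> :: nat
  assumes "c \<le> a" and "2 \<le> c"
    and "1 \<le> \<beta>" and "\<beta> + 1 \<le> b"
    and "1 \<le> \<gamma>" and "b + 1 \<le> a + \<gamma>"
    and "\<gamma> + 1 \<le> b" and "\<gamma> + 1 \<le> c"
    and "a = 2 \<or> b = 2 \<or> c = 2"
  shows "has_WLP (gen_ideal
           [mon3 a 0 0,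
            mon3 0 b 0 - mon3 (b - \<gamma>) 0 \<gamma>,
            mon3 0 0 c,
            mon3 (a - b + \<gamma>) (b - \<beta>) 0,
            mon3 0 (b - \<beta>) (c - \<gamma>)] :: 'k::field_char_0 poly3 set)"
proof -
  have "\<gamma> = 1"
    using assms by auto
  interpret gamma_one_ideal a b c "b - \<beta>"
    using assms by unfold_locales simp
  have "has_WLP (ideal :: 'k poly3 set)"
    by (rule has_WLP_ideal) (use assms \<open>\<gamma> = 1\<close> in auto)
  then show ?thesis
    using \<open>\<gamma> = 1\<close> by (simp add: gens_def)
qed

end
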